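(* For every integer $n\ge1$ and every $\eta>0$, $$\sup_{0\ne f\in\mathcal{T}_n(\eta)}\frac{|f'(0)|}{\|f\|_{[0,1]}} \ge 2(n-1)^2.$$
   Context: For $\eta>0$, $\mathcal{T}_n(\eta)$ denotes the set of all functions $f(t)=\sum_{j=1}^na_je^{i\lambda_jt}$ with $a_j\in\mathbb{C}$ and real $0<\lambda_1<\lambda_2<\cdots<\lambda_n<\eta$. $\|f\|_{[0,1]}:=\sup_{t\in[0,1]}|f(t)|$. *)

theory Defs
  imports "HOL-Analysis.Analysis"
begin

definition expsums :: "nat \<Rightarrow> real \<Rightarrow> (real \<Rightarrow> complex) set" where
  "expsums n \<eta> = {f. \<exists>(a::nat \<Rightarrow> complex) (lam::nat \<Rightarrow> real).
      (\<forall>j\<in>{1..n}. 0 < lam j \<and> lam j < \<eta>) \<and>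
      (\<forall>j\<in>{1..<n}. lam j < lam (Suc j)) \<and>
      f = (\<lambda>t. \<Sum>j=1..n. a j * exp (\<i> * complex_of_real (lam j * t)))}"

definition supnorm01 :: "(real \<Rightarrow> complex) \<Rightarrow> real" where
  "supnorm01 f = (SUP t\<in>{0..1}. cmod (f t))"

end

theory Submission
  imports Defs "HOL-Probability.Characteristic_Functions"
begin

text \<open>Let \<open>T\<close> be the Chebyshev polynomial of degree \<open>N = n - 1\<close>: \<open>|T| \<le> 1\<close> on \<open>[-1,1]\<close>,
  \<open>T(1) = 1\<close> and \<open>T'(1) = N\<^sup>2\<close>, so \<open>t \<mapsto> T(1 - 2t)\<close> has sup norm 1 on \<open>[0,1]\<close> and derivative
  \<open>-2N\<^sup>2\<close> at 0. It is not an exponential sum, but replacing the segment \<open>1 - 2t\<close> by the arc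
  \<open>w(t) = 1 - 2(exp(i\<epsilon>t) - 1)/(i\<epsilon>)\<close>, which stays within \<open>\<epsilon>t\<^sup>2\<close> of it, turns
  \<open>exp(i\<epsilon>t) T(w(t))\<close> into a polynomial in \<open>exp(i\<epsilon>t)\<close> without constant term, i.e. an exponential
  sum with frequencies \<open>\<epsilon>, 2\<epsilon>, ..., n\<epsilon>\<close>. As \<open>\<epsilon> \<rightarrow> 0\<close> its sup norm tends to 1 while its
  derivative at 0 is \<open>i\<epsilon> - 2N\<^sup>2\<close>.\<close>

fun cheb_poly :: "nat \<Rightarrow> complex poly" where
  "cheb_poly 0 = 1"
| "cheb_poly (Suc 0) = [:0, 1:]"
| "cheb_poly (Suc (Suc k)) = [:0, 2:] * cheb_poly (Suc k) - cheb_poly k"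

lemma degree_cheb_poly_le: "degree (cheb_poly k) \<le> k"
proof (induction k rule: cheb_poly.induct)
  case (3 k)
  have "degree ([:0, 2:] * cheb_poly (Suc k)) \<le> Suc (Suc k)"
    using degree_mult_le[of "[:0, 2:]" "cheb_poly (Suc k)"] 3(1) by simp
  then show ?case
    using 3 by (simp add: degree_diff_le)
qed auto

lemma poly_cheb_poly_1: "poly (cheb_poly k) 1 = 1"
  by (induction k rule: cheb_poly.induct) auto

lemma poly_pderiv_cheb_poly_1: "poly (pderiv (cheb_poly k)) 1 = of_nat (k\<^sup>2)"
  by (induction k rule: cheb_poly.induct)
    (auto simp: pderiv_mult pderiv_diff pderiv_smult pderiv_pCons poly_cheb_poly_1 algebra_simps power2_eq_square)

lemma poly_cheb_poly_cos:
  assumes "\<bar>x\<bar> \<le> 1"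
  shows "poly (cheb_poly k) (of_real x) = of_real (cos (real k * arccos x))"
  using assms
proof (induction k rule: cheb_poly.induct)
  case (3 k)
  define \<theta> where "\<theta> = arccos x"
  have x: "x = cos \<theta>"
    using 3(3) by (simp add: \<theta>_def cos_arccos_abs)
  have "cos (real (Suc (Suc k)) * \<theta>) = 2 * cos \<theta> * cos (real (Suc k) * \<theta>) - cos (real k * \<theta>)"
    using cos_add[of "real (Suc k) * \<theta>" \<theta>] cos_diff[of "real (Suc k) * \<theta>" \<theta>]
    by (simp add: algebra_simps)
  then show ?case
    using 3 by (simp add: x[symmetric] \<theta>_def)
qed auto

lemma norm_poly_cheb_poly_le_1: "\<bar>x\<bar> \<le> 1 \<Longrightarrow> cmod (poly (cheb_poly k) (of_real x)) \<le> 1"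
  by (simp add: poly_cheb_poly_cos)

lemma iexp_mult_poly_eq_sum:
  fixes q :: "complex poly"
  assumes "degree q \<le> N"
  shows "iexp x * poly q (iexp x) = (\<Sum>j=1..Suc N. coeff q (j - 1) * iexp (real j * x))"
proof -
  have "poly q (iexp x) = (\<Sum>i\<le>N. coeff q i * iexp x ^ i)"
    unfolding poly_altdef
    by (rule sum.mono_neutral_left) (use assms in \<open>auto simp: coeff_eq_0\<close>)
  then have "iexp x * poly q (iexp x) = (\<Sum>i\<le>N. coeff q i * iexp x ^ Suc i)"
    by (simp add: sum_distrib_left algebra_simps)
  also have "\<dots> = (\<Sum>j=1..Suc N. coeff q (j - 1) * iexp x ^ j)"
    unfolding atMost_atLeast0 sum.shift_bounds_cl_Suc_ivl One_nat_def by simp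
  also have "\<dots> = (\<Sum>j=1..Suc N. coeff q (j - 1) * iexp (real j * x))"
    by (simp add: exp_of_nat_mult[symmetric] algebra_simps)
  finally show ?thesis .
qed

lemma iexp_mult_poly_in_expsums:
  fixes q :: "complex poly"
  assumes "degree q \<le> N" and "\<epsilon> > 0" and "\<epsilon> * (real N + 1) < \<eta>"
  shows "(\<lambda>t. iexp (\<epsilon> * t) * poly q (iexp (\<epsilon> * t))) \<in> expsums (Suc N) \<eta>"
  unfolding expsums_def
proof (intro CollectI exI[of _ "\<lambda>j. coeff q (j - 1)"] exI[of _ "\<lambda>j. \<epsilon> * real j"] conjI ballI)
  fix j assume j: "j \<in> {1..Suc N}"
  then show "0 < \<epsilon> * real j"
    using assms(2) by simp
  have "\<epsilon> * real j \<le> \<epsilon> * (real N + 1)"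
    using j assms(2) by (intro mult_left_mono) auto
  then show "\<epsilon> * real j < \<eta>"
    using assms(3) by simp
next
  show "(\<lambda>t. iexp (\<epsilon> * t) * poly q (iexp (\<epsilon> * t))) =
      (\<lambda>t. \<Sum>j=1..Suc N. coeff q (j - 1) * iexp (\<epsilon> * real j * t))"
    using iexp_mult_poly_eq_sum[OF assms(1), of "\<epsilon> * _"] by (simp add: mult_ac)
qed (use assms(2) in simp)

definition segment_arc :: "real \<Rightarrow> real \<Rightarrow> complex" where
  "segment_arc \<epsilon> t = 1 - 2 * (iexp (\<epsilon> * t) - 1) / (\<i> * of_real \<epsilon>)"

lemma segment_arc_0 [simp]: "segment_arc \<epsilon> 0 = 1"
  by (simp add: segment_arc_def)

lemma norm_segment_arc_minus_segment:
  assumes "\<epsilon> > 0"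
  shows "cmod (segment_arc \<epsilon> t - of_real (1 - 2 * t)) \<le> \<epsilon> * t\<^sup>2"
proof -
  have "segment_arc \<epsilon> t - of_real (1 - 2 * t) =
      - 2 / (\<i> * of_real \<epsilon>) * (iexp (\<epsilon> * t) - (1 + \<i> * of_real (\<epsilon> * t)))"
    using assms by (simp add: segment_arc_def field_simps)
  also have "cmod \<dots> = 2 / \<epsilon> * cmod (iexp (\<epsilon> * t) - (1 + \<i> * of_real (\<epsilon> * t)))"
    using assms by (simp only: norm_mult norm_divide) simp
  also have "\<dots> \<le> 2 / \<epsilon> * ((\<epsilon> * t)\<^sup>2 / 2)"
    using iexp_approx1[of "\<epsilon> * t" 1] assms by (intro mult_left_mono) (simp_all add: numeral_2_eq_2)
  also have "\<dots> = \<epsilon> * t\<^sup>2"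
    using assms by (simp add: power2_eq_square)
  finally show ?thesis .
qed

lemma arc_expsum_in_expsums:
  fixes p :: "complex poly"
  assumes "degree p \<le> N" and "\<epsilon> > 0" and "\<epsilon> * (real N + 1) < \<eta>"
  shows "(\<lambda>t. iexp (\<epsilon> * t) * poly p (segment_arc \<epsilon> t)) \<in> expsums (Suc N) \<eta>"
proof -
  define c where "c = \<i> * complex_of_real \<epsilon>"
  define q where "q = p \<circ>\<^sub>p [:1 + 2 / c, - 2 / c:]"
  have "poly p (segment_arc \<epsilon> t) = poly q (iexp (\<epsilon> * t))" for t
    by (simp add: q_def c_def poly_pcompose segment_arc_def algebra_simps diff_divide_distrib)
  moreover have "degree q \<le> N"
    using assms(1) by (simp add: q_def degree_pcompose)
  ultimately show ?thesis
    using iexp_mult_poly_in_expsums[OF _ assms(2,3)] by simp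
qed

lemma arc_expsum_vector_derivative:
  fixes p :: "complex poly"
  assumes "\<epsilon> \<noteq> 0"
  shows "vector_derivative (\<lambda>t. iexp (\<epsilon> * t) * poly p (segment_arc \<epsilon> t)) (at 0) =
    \<i> * of_real \<epsilon> * poly p 1 - 2 * poly (pderiv p) 1"
proof (rule vector_derivative_at)
  define c where "c = \<i> * complex_of_real \<epsilon>"
  define G where "G = (\<lambda>z. exp (c * z) * poly p (1 - 2 * (exp (c * z) - 1) / c))"
  have "c \<noteq> 0"
    using assms by (simp add: c_def)
  have "(G has_field_derivative c * poly p 1 - 2 * poly (pderiv p) 1) (at 0)"
  proof -
    have "(G has_field_derivative c * exp (c * 0) * poly p (1 - 2 * (exp (c * 0) - 1) / c) +
        exp (c * 0) * (poly (pderiv p) (1 - 2 * (exp (c * 0) - 1) / c) * (- (2 * (c * exp (c * 0)) / c))))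
        (at 0)"
      unfolding G_def by (auto intro!: derivative_eq_intros poly_DERIV simp: algebra_simps)
    then show ?thesis
      using \<open>c \<noteq> 0\<close> by (simp add: mult.commute)
  qed
  then have "((\<lambda>t. G (of_real t)) has_vector_derivative c * poly p 1 - 2 * poly (pderiv p) 1) (at 0)"
    by (intro has_vector_derivative_real_field) simp
  moreover have "(\<lambda>t. G (of_real t)) = (\<lambda>t. iexp (\<epsilon> * t) * poly p (segment_arc \<epsilon> t))"
    by (simp add: G_def c_def segment_arc_def algebra_simps)
  ultimately show "((\<lambda>t. iexp (\<epsilon> * t) * poly p (segment_arc \<epsilon> t)) has_vector_derivative
      \<i> * of_real \<epsilon> * poly p 1 - 2 * poly (pderiv p) 1) (at 0)"
    by (simp add: c_def)
qed

lemma arc_expsum_norm_le: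
  fixes p :: "complex poly"
  assumes "\<And>x. \<bar>x\<bar> \<le> 1 \<Longrightarrow> cmod (poly p (of_real x)) \<le> 1" and "\<delta> > 0"
  obtains \<epsilon>\<^sub>0 where "\<epsilon>\<^sub>0 > 0"
    and "\<And>\<epsilon> t. 0 < \<epsilon> \<Longrightarrow> \<epsilon> \<le> \<epsilon>\<^sub>0 \<Longrightarrow> t \<in> {0..1} \<Longrightarrow>
      cmod (iexp (\<epsilon> * t) * poly p (segment_arc \<epsilon> t)) \<le> 1 + \<delta>"
proof -
  have "uniformly_continuous_on (cball 0 2) (poly p)"
    by (intro compact_uniformly_continuous continuous_intros) auto
  then obtain \<rho> where "\<rho> > 0"
    and \<rho>: "\<And>z w. z \<in> cball 0 2 \<Longrightarrow> w \<in> cball 0 2 \<Longrightarrow> dist z w < \<rho> \<Longrightarrow> dist (poly p z) (poly p w) < \<delta>"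
    using assms(2) unfolding uniformly_continuous_on_def by metis
  show thesis
  proof
    show "min 1 (\<rho> / 2) > 0"
      using \<open>\<rho> > 0\<close> by simp
  next
    fix \<epsilon> t :: real
    assume \<epsilon>: "0 < \<epsilon>" "\<epsilon> \<le> min 1 (\<rho> / 2)" and t: "t \<in> {0..1}"
    define x where "x = 1 - 2 * t"
    have "\<bar>x\<bar> \<le> 1"
      using t by (auto simp: x_def)
    have "cmod (segment_arc \<epsilon> t - of_real x) \<le> \<epsilon> * t\<^sup>2"
      using norm_segment_arc_minus_segment[OF \<epsilon>(1)] by (simp add: x_def)
    also have "\<dots> \<le> \<epsilon>"
      using t \<epsilon>(1) by (auto intro!: mult_left_le simp: power_le_one)
    finally have close: "dist (segment_arc \<epsilon> t) (of_real x) \<le> \<epsilon>"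
      by (simp add: dist_norm)
    have "of_real x \<in> cball (0 :: complex) 2"
      using \<open>\<bar>x\<bar> \<le> 1\<close> by simp
    moreover have "segment_arc \<epsilon> t \<in> cball 0 2"
      using close \<open>\<bar>x\<bar> \<le> 1\<close> \<epsilon>(2) dist_triangle[of 0 "segment_arc \<epsilon> t" "of_real x"]
      by (simp add: dist_commute)
    ultimately have "dist (poly p (segment_arc \<epsilon> t)) (poly p (of_real x)) < \<delta>"
      using \<rho> close \<epsilon>(2) \<open>\<rho> > 0\<close> by simp
    then have "cmod (poly p (segment_arc \<epsilon> t)) < 1 + \<delta>"
      using assms(1)[OF \<open>\<bar>x\<bar> \<le> 1\<close>] norm_triangle_ineq2[of "poly p (segment_arc \<epsilon> t)" "poly p (of_real x)"]
      by (simp add: dist_norm)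
    then show "cmod (iexp (\<epsilon> * t) * poly p (segment_arc \<epsilon> t)) \<le> 1 + \<delta>"
      by (simp add: norm_mult)
  qed
qed

lemma supnorm01_le: "(\<And>t. t \<in> {0..1} \<Longrightarrow> cmod (f t) \<le> B) \<Longrightarrow> supnorm01 f \<le> B"
  unfolding supnorm01_def by (rule cSUP_least) auto

lemma norm_le_supnorm01:
  assumes "\<And>t. t \<in> {0..1} \<Longrightarrow> cmod (f t) \<le> B" and "t \<in> {0..1}"
  shows "cmod (f t) \<le> supnorm01 f"
  unfolding supnorm01_def using assms by (intro cSUP_upper bdd_aboveI2) auto

lemma cheb_arc_expsum_approx:
  assumes "\<eta> > 0" and "\<delta> > 0"
  obtains f where "f \<in> expsums (Suc N) \<eta>" and "f \<noteq> (\<lambda>_. 0)"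
    and "2 * real N ^ 2 - \<delta> \<le> cmod (vector_derivative f (at 0))"
    and "0 < supnorm01 f" and "supnorm01 f \<le> 1 + \<delta>"
proof -
  obtain \<epsilon>\<^sub>0 where "\<epsilon>\<^sub>0 > 0" and small:
    "\<And>\<epsilon> t. 0 < \<epsilon> \<Longrightarrow> \<epsilon> \<le> \<epsilon>\<^sub>0 \<Longrightarrow> t \<in> {0..1} \<Longrightarrow>
      cmod (iexp (\<epsilon> * t) * poly (cheb_poly N) (segment_arc \<epsilon> t)) \<le> 1 + \<delta>"
    using arc_expsum_norm_le[OF norm_poly_cheb_poly_le_1 assms(2)] by blast
  define \<epsilon> where "\<epsilon> = min (min \<epsilon>\<^sub>0 \<delta>) (\<eta> / (2 * (real N + 1)))"
  define f where "f = (\<lambda>t. iexp (\<epsilon> * t) * poly (cheb_poly N) (segment_arc \<epsilon> t))"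
  have "\<epsilon> > 0"
    using assms \<open>\<epsilon>\<^sub>0 > 0\<close> by (simp add: \<epsilon>_def)
  have "\<epsilon> * (real N + 1) \<le> \<eta> / (2 * (real N + 1)) * (real N + 1)"
    by (intro mult_right_mono) (auto simp: \<epsilon>_def)
  also have "\<dots> = \<eta> / 2"
    by (simp add: field_simps)
  finally have "\<epsilon> * (real N + 1) \<le> \<eta> / 2" .
  then have "f \<in> expsums (Suc N) \<eta>"
    unfolding f_def using assms(1) \<open>\<epsilon> > 0\<close> by (intro arc_expsum_in_expsums degree_cheb_poly_le) auto
  moreover have "f 0 = 1"
    by (simp add: f_def poly_cheb_poly_1)
  moreover have "2 * real N ^ 2 - \<delta> \<le> cmod (vector_derivative f (at 0))"
  proof -
    have "vector_derivative f (at 0) = \<i> * of_real \<epsilon> - 2 * of_nat (N\<^sup>2)"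
      using arc_expsum_vector_derivative[of \<epsilon> "cheb_poly N"] \<open>\<epsilon> > 0\<close> unfolding f_def
      by (simp add: poly_cheb_poly_1 poly_pderiv_cheb_poly_1)
    moreover have "cmod (2 * of_nat (N\<^sup>2) :: complex) \<le> cmod (\<i> * of_real \<epsilon> - 2 * of_nat (N\<^sup>2)) + \<epsilon>"
      using norm_triangle_ineq4[of "\<i> * of_real \<epsilon>" "\<i> * of_real \<epsilon> - 2 * of_nat (N\<^sup>2)"] \<open>\<epsilon> > 0\<close>
      by (simp add: norm_mult)
    moreover have "cmod (2 * of_nat (N\<^sup>2) :: complex) = 2 * real N ^ 2"
      by (simp add: norm_mult norm_power)
    moreover have "\<epsilon> \<le> \<delta>"
      by (simp add: \<epsilon>_def)
    ultimately show ?thesis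
      by simp
  qed
  moreover have bound: "cmod (f t) \<le> 1 + \<delta>" if "t \<in> {0..1}" for t
    unfolding f_def using small[OF \<open>\<epsilon> > 0\<close> _ that] by (simp add: \<epsilon>_def)
  then have "supnorm01 f \<le> 1 + \<delta>"
    by (rule supnorm01_le)
  moreover have "1 \<le> supnorm01 f"
    using norm_le_supnorm01[of f "1 + \<delta>" 0] bound \<open>f 0 = 1\<close> by simp
  ultimately show thesis
    using that by fastforce
qed

lemma quotient_lower_bound:
  fixes d s \<delta> M :: real
  assumes "0 \<le> M" and "0 \<le> \<delta>" and "0 \<le> d" and "2 * M - \<delta> \<le> d" and "0 < s" and "s \<le> 1 + \<delta>"
  shows "2 * M - (2 * M + 1) * \<delta> \<le> d / s"
proof (cases "2 * M - (2 * M + 1) * \<delta> \<le> 0")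
  case True
  then show ?thesis
    using assms(3,5) by (meson divide_nonneg_pos order.trans)
next
  case False
  have "(2 * M - (2 * M + 1) * \<delta>) * s \<le> (2 * M - (2 * M + 1) * \<delta>) * (1 + \<delta>)"
    using False assms(6) by (intro mult_left_mono) auto
  also have "\<dots> = 2 * M - \<delta> - (2 * M + 1) * \<delta>\<^sup>2"
    by (simp add: algebra_simps power2_eq_square)
  also have "\<dots> \<le> d"
    using assms(1,4) zero_le_power2[of \<delta>] by (smt (verit) mult_nonneg_nonneg)
  finally show ?thesis
    using assms(5) by (simp add: pos_le_divide_eq)
qed

theorem theorem9p2:
  fixes n :: nat and \<eta> :: real
  assumes "n \<ge> 1" and "\<eta> > 0"
  shows "(SUP f\<in>{f\<in>expsums n \<eta>. f \<noteq> (\<lambda>_. 0)}.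
            ereal (cmod (vector_derivative f (at 0)) / supnorm01 f))
         \<ge> ereal (2 * (real n - 1)^2)"
proof -
  obtain N where n: "n = Suc N"
    using assms(1) by (cases n) auto
  define M where "M = real N ^ 2"
  have "2 * M + 1 > 0"
    by (simp add: M_def add_nonneg_pos)
  show ?thesis
  proof (rule ereal_le_epsilon2)
    fix e :: real
    assume "e > 0"
    then have "e / (2 * M + 1) > 0"
      using \<open>2 * M + 1 > 0\<close> by simp
    then obtain f where f: "f \<in> {f\<in>expsums n \<eta>. f \<noteq> (\<lambda>_. 0)}"
      and d: "2 * M - e / (2 * M + 1) \<le> cmod (vector_derivative f (at 0))"
      and s: "0 < supnorm01 f" "supnorm01 f \<le> 1 + e / (2 * M + 1)"
      using cheb_arc_expsum_approx[OF assms(2), of "e / (2 * M + 1)" N] by (auto simp: n M_def)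
    have "2 * M - e \<le> cmod (vector_derivative f (at 0)) / supnorm01 f"
      using quotient_lower_bound[OF _ _ norm_ge_zero d s] \<open>e > 0\<close> \<open>2 * M + 1 > 0\<close>
      by (simp add: M_def)
    then have "ereal (2 * (real n - 1)^2) \<le> ereal (cmod (vector_derivative f (at 0)) / supnorm01 f) + ereal e"
      by (simp add: n M_def)
    also have "\<dots> \<le> (SUP f\<in>{f\<in>expsums n \<eta>. f \<noteq> (\<lambda>_. 0)}.
        ereal (cmod (vector_derivative f (at 0)) / supnorm01 f)) + ereal e"
      by (intro add_right_mono SUP_upper f)
    finally show "ereal (2 * (real n - 1)^2) \<le> (SUP f\<in>{f\<in>expsums n \<eta>. f \<noteq> (\<lambda>_. 0)}.
        ereal (cmod (vector_derivative f (at 0)) / supnorm01 f)) + ereal e" .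
  qed
qed

end
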